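(* Let $N\ge2$, $T=\{x\in\mathbb{R}^N:1<|x|<2\}$, $2<p<2^*$ ($2^*=\frac{2N}{N-2}$ if $N\ge3$, $+\infty$ if $N=2$), and for $\lambda>0$ let $u_\lambda$ be the unique positive solution in $H^1_{0,rad}(T)$ of $-\Delta u+\lambda u=u^{p-1}$ in $T$, $u=0$ on $\partial T$. Then $$0<\liminf_{\lambda\to+\infty}\frac{\lambda}{\|u_\lambda\|_{L^\infty}^{p-2}}\le\limsup_{\lambda\to+\infty}\frac{\lambda}{\|u_\lambda\|_{L^\infty}^{p-2}}\le 1.$$ *)

theory Defs
  imports "HOL-Analysis.Analysis"
begin

definition annulus :: "'a::euclidean_space set" where
  "annulus = {x. 1 < norm x \<and> norm x < 2}"

definition C2_on :: "'a::euclidean_space set \<Rightarrow> ('a \<Rightarrow> real) \<Rightarrow> bool" where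
  "C2_on S f \<longleftrightarrow> (\<exists>(f' :: 'a \<Rightarrow> 'a \<Rightarrow>\<^sub>L real) (f'' :: 'a \<Rightarrow> 'a \<Rightarrow>\<^sub>L ('a \<Rightarrow>\<^sub>L real)).
      (\<forall>x\<in>S. (f has_derivative blinfun_apply (f' x)) (at x)) \<and>
      (\<forall>x\<in>S. (f' has_derivative blinfun_apply (f'' x)) (at x)) \<and>
      continuous_on S f'')"

definition laplacian :: "('a::euclidean_space \<Rightarrow> real) \<Rightarrow> 'a \<Rightarrow> real" where
  "laplacian f x = (\<Sum>i\<in>Basis. deriv (deriv (\<lambda>t. f (x + t *\<^sub>R i))) 0)"

definition pos_rad_sol :: "real \<Rightarrow> real \<Rightarrow> ('a::euclidean_space \<Rightarrow> real) \<Rightarrow> bool" where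
  "pos_rad_sol p lam u \<longleftrightarrow>
     C2_on annulus u \<and>
     continuous_on (closure annulus) u \<and>
     (\<forall>x. norm x = 1 \<or> norm x = 2 \<longrightarrow> u x = 0) \<and>
     (\<forall>x\<in>annulus. u x > 0) \<and>
     (\<forall>x y. norm x = norm y \<longrightarrow> u x = u y) \<and>
     (\<forall>x\<in>annulus. - laplacian u x + lam * u x = u x powr (p - 1))"

text \<open>L^infinity norm on T (u is continuous, so the essential sup is the sup).\<close>
definition Linf_norm :: "('a::euclidean_space \<Rightarrow> real) \<Rightarrow> real" where
  "Linf_norm u = Sup ((\<lambda>x. \<bar>u x\<bar>) ` annulus)"

end

theory Submission
  imports Defs
begin

(*
  Write v for the radial profile of u lam, M = v r0 for its maximum and Q = M^(p-2).
  At the maximum v' r0 = 0 and v'' r0 <= 0, so the equation gives lam <= Q: this is the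
  upper bound.  For the lower bound suppose lam <= eps Q.  While v stays above the level
  theta M, the reaction term lam v - v^(p-1) is at most -(theta M)^(p-1) / 2, so the flux
  r^n v' decreases linearly and v falls to theta M within distance O(Q^(-1/2)) of r0.
  Below that level the energy v'^2/2 + v^p/p - lam v^2/2 (nonincreasing in r) and, right
  of r0, its weighted version r^(2n) (energy + lam M^2/2) (nondecreasing) keep |v'| of
  order M^(p/2), so v vanishes within a further distance O(Q^(-1/2)).  Since the annulus
  has width 1, Q stays bounded, which is incompatible with lam <= eps Q for large lam.
*)

section \<open>Real functions of one variable\<close>

lemma first_crossing:
  fixes f :: "real \<Rightarrow> real"
  assumes "a \<le> b" and cont: "continuous_on {a..b} f" and "f a \<le> c" "c \<le> f b"
  obtains s where "a \<le> s" "s \<le> b" "f s = c" "\<And>x. a \<le> x \<Longrightarrow> x < s \<Longrightarrow> f x < c"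
proof -
  define S where "S = {a..b} \<inter> f -` {c..}"
  have "closed S"
    unfolding S_def by (rule continuous_closed_preimage[OF cont]) auto
  moreover have "b \<in> S" "bdd_below S"
    using assms by (auto simp: S_def intro: bdd_belowI[of _ a])
  ultimately have s: "Inf S \<in> S"
    using closed_contains_Inf by blast
  have below: "f x < c" if "a \<le> x" "x < Inf S" for x
  proof (rule ccontr)
    assume "\<not> f x < c"
    then have "x \<in> S"
      using that s by (auto simp: S_def)
    then show False
      using that cInf_lower[OF _ \<open>bdd_below S\<close>] by fastforce
  qed
  have "continuous_on {a..Inf S} f"
    using s by (auto intro: continuous_on_subset[OF cont] simp: S_def)
  then obtain x where "a \<le> x" "x \<le> Inf S" "f x = c"
    using IVT'[of f a c "Inf S"] s assms(3) by (auto simp: S_def)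
  then have "f (Inf S) = c"
    using below by fastforce
  with s below show ?thesis
    by (intro that) (auto simp: S_def)
qed

lemma diff_le_diff_of_deriv_le:
  fixes f g :: "real \<Rightarrow> real"
  assumes "a \<le> b" "continuous_on {a..b} f" "continuous_on {a..b} g"
    and "\<And>x. a < x \<Longrightarrow> x < b \<Longrightarrow> (f has_real_derivative f' x) (at x)"
    and "\<And>x. a < x \<Longrightarrow> x < b \<Longrightarrow> (g has_real_derivative g' x) (at x)"
    and "\<And>x. a < x \<Longrightarrow> x < b \<Longrightarrow> f' x \<le> g' x"
  shows "f b - f a \<le> g b - g a"
proof -
  have "(\<lambda>x. f x - g x) b \<le> (\<lambda>x. f x - g x) a"
  proof (rule DERIV_nonpos_imp_decreasing_open[OF \<open>a \<le> b\<close>])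
    fix x assume "a < x" "x < b"
    then show "\<exists>y. ((\<lambda>x. f x - g x) has_real_derivative y) (at x) \<and> y \<le> 0"
      using assms(4-6) by (intro exI[of _ "f' x - g' x"]) (auto intro: DERIV_diff)
  qed (use assms(2,3) in \<open>auto intro: continuous_intros\<close>)
  then show ?thesis
    by simp
qed

(* w can change sign only through a zero, but it is bounded away from zero as long as v
   stays below m, and v does stay below m while w < 0. *)
lemma deriv_le_neg_below_level:
  fixes v w :: "real \<Rightarrow> real"
  assumes "0 < \<kappa>" "v r1 \<le> m" "w r1 \<le> 0" and cont: "continuous_on {r1..b} v"
    and der: "\<And>r. r1 \<le> r \<Longrightarrow> r < b \<Longrightarrow> (v has_real_derivative w r) (at r)"
    and w_cont: "\<And>r. r1 \<le> r \<Longrightarrow> r < b \<Longrightarrow> isCont w r"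
    and steep: "\<And>r. r1 \<le> r \<Longrightarrow> r < b \<Longrightarrow> v r \<le> m \<Longrightarrow> \<kappa> \<le> \<bar>w r\<bar>"
    and t: "r1 \<le> t" "t < b"
  shows "w t \<le> - \<kappa>"
proof -
  have below: "v s \<le> m" if "r1 \<le> s" "s < b" "\<And>x. r1 < x \<Longrightarrow> x < s \<Longrightarrow> w x < 0" for s
  proof -
    have "v s \<le> v r1"
    proof (rule DERIV_nonpos_imp_decreasing_open[OF that(1)])
      fix x assume "r1 < x" "x < s"
      then show "\<exists>y. (v has_real_derivative y) (at x) \<and> y \<le> 0"
        using der[of x] that by (auto intro: less_imp_le)
    qed (use continuous_on_subset[OF cont] that in auto)
    with \<open>v r1 \<le> m\<close> show ?thesis
      by simp
  qed
  have neg: "w s < 0" if s: "r1 \<le> s" "s < b" for s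
  proof (rule ccontr)
    assume "\<not> w s < 0"
    then have "0 \<le> w s"
      by simp
    moreover have "continuous_on {r1..s} w"
      using w_cont s by (intro continuous_at_imp_continuous_on) auto
    ultimately obtain z where z: "r1 \<le> z" "z \<le> s" "w z = 0" "\<And>x. r1 \<le> x \<Longrightarrow> x < z \<Longrightarrow> w x < 0"
      using first_crossing[of r1 s w 0] s \<open>w r1 \<le> 0\<close> by blast
    then have "\<kappa> \<le> \<bar>w z\<bar>"
      using steep[of z] below[of z] s by auto
    with z \<open>0 < \<kappa>\<close> show False
      by simp
  qed
  then have "v t \<le> m"
    using below t by auto
  then show ?thesis
    using steep[OF t] neg[OF t] by linarith
qed

lemma length_to_zero_le:
  fixes v w :: "real \<Rightarrow> real"
  assumes "r0 < b" "0 < \<alpha>" "0 < \<kappa>" "0 \<le> m" "m \<le> v r0"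
    and cont: "continuous_on {r0..b} v" and "v b = 0"
    and der: "\<And>r. r0 \<le> r \<Longrightarrow> r < b \<Longrightarrow> (v has_real_derivative w r) (at r)"
    and w_cont: "\<And>r. r0 \<le> r \<Longrightarrow> r < b \<Longrightarrow> isCont w r"
    and slope: "\<And>r. r0 \<le> r \<Longrightarrow> r < b \<Longrightarrow> (\<forall>s\<in>{r0..r}. m \<le> v s) \<Longrightarrow> w r \<le> - \<alpha> * (r - r0)"
    and steep: "\<And>r. r0 \<le> r \<Longrightarrow> r < b \<Longrightarrow> v r \<le> m \<Longrightarrow> \<kappa> \<le> \<bar>w r\<bar>"
  shows "b - r0 \<le> sqrt (2 * v r0 / \<alpha>) + m / \<kappa>"
proof -
  obtain r1 where r1: "r0 \<le> r1" "r1 \<le> b" "v r1 = m" and "\<And>s. r0 \<le> s \<Longrightarrow> s < r1 \<Longrightarrow> m < v s"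
    using first_crossing[of r0 b "\<lambda>r. - v r" "- m"] assms(1,4,5,7) cont
    by (auto intro: continuous_intros)
  then have above: "\<forall>s\<in>{r0..r1}. m \<le> v s"
    by (metis atLeastAtMost_iff less_eq_real_def)
  have "v r1 - v r0 \<le> - \<alpha> / 2 * (r1 - r0)\<^sup>2 - - \<alpha> / 2 * (r0 - r0)\<^sup>2"
    using der slope above r1 continuous_on_subset[OF cont]
    by (intro diff_le_diff_of_deriv_le[where f' = w and g' = "\<lambda>r. - \<alpha> * (r - r0)"])
      (auto intro!: derivative_eq_intros continuous_intros)
  then have "(r1 - r0)\<^sup>2 \<le> 2 * v r0 / \<alpha>"
    using r1(3) assms(2,4) by (simp add: field_simps)
  then have "r1 - r0 \<le> sqrt (2 * v r0 / \<alpha>)"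
    using r1(1) by (simp add: real_le_rsqrt)
  moreover have "v b - v r1 \<le> - \<kappa> * (b - r1) - - \<kappa> * (r1 - r1)"
  proof (rule diff_le_diff_of_deriv_le[where f' = w and g' = "\<lambda>_. - \<kappa>"])
    show "w x \<le> - \<kappa>" if "r1 < x" "x < b" for x
    proof -
      have "w r1 \<le> 0"
        using slope[of r1] above r1 that assms(2) by (auto intro: order_trans)
      then show ?thesis
        using deriv_le_neg_below_level[of \<kappa> v r1 m w b x] assms(3) r1 that der w_cont steep
          continuous_on_subset[OF cont] by auto
    qed
  qed (use der r1 continuous_on_subset[OF cont] in \<open>auto intro!: derivative_eq_intros continuous_intros\<close>)
  then have "b - r1 \<le> m / \<kappa>"
    using r1(3) assms(3,7) by (simp add: field_simps)
  ultimately show ?thesis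
    by linarith
qed

lemma local_max_second_deriv_nonpos:
  fixes f f' :: "real \<Rightarrow> real"
  assumes "0 < d"
    and der: "\<And>y. \<bar>x - y\<bar> < d \<Longrightarrow> (f has_real_derivative f' y) (at y)"
    and der2: "(f' has_real_derivative D) (at x)"
    and max: "\<And>y. \<bar>x - y\<bar> < d \<Longrightarrow> f y \<le> f x"
  shows "D \<le> 0"
proof (rule ccontr)
  assume "\<not> D \<le> 0"
  then obtain e where "0 < e" and increasing: "\<And>h. 0 < h \<Longrightarrow> h < e \<Longrightarrow> f' x < f' (x + h)"
    using DERIV_pos_inc_right[OF der2] by force
  have "f' x = 0"
    using DERIV_local_max[OF der[of x] \<open>0 < d\<close>] max \<open>0 < d\<close> by auto
  define h where "h = min d e / 2"
  have h: "0 < h" "h < d" "h < e"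
    using \<open>0 < d\<close> \<open>0 < e\<close> by (auto simp: h_def)
  obtain z where z: "x < z" "z < x + h" "f (x + h) - f x = h * f' z"
    using MVT2[of x "x + h" f f'] der h by force
  have "0 < f' z"
    using increasing[of "z - x"] z h \<open>f' x = 0\<close> by auto
  then have "f x < f (x + h)"
    using z h by (simp add: algebra_simps)
  with max[of "x + h"] h show False
    by auto
qed

section \<open>The radial equation\<close>

lemma powr_eq_mult_powr_diff:
  fixes x a b :: real
  assumes "0 < x"
  shows "x powr a = x powr b * x powr (a - b)"
  using assms by (simp add: powr_add[symmetric])

lemma reaction_le_above_level:
  fixes p lam m x :: real
  assumes "2 \<le> p" "0 < m" "m \<le> x" "lam \<le> m powr (p - 2) / 2"
  shows "lam * x - x powr (p - 1) \<le> - (m powr (p - 1) / 2)"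
proof -
  have "0 < x"
    using assms by linarith
  have "m powr (p - 2) \<le> x powr (p - 2)"
    using assms by (intro powr_mono2) auto
  then have "x * m powr (p - 2) \<le> x powr (p - 1)"
    using powr_eq_mult_powr_diff[OF \<open>0 < x\<close>, of "p - 1" 1] \<open>0 < x\<close> by simp
  moreover have "lam * x \<le> x * m powr (p - 2) / 2"
    using mult_right_mono[OF assms(4), of x] \<open>0 < x\<close> by (simp add: mult.commute)
  moreover have "m * m powr (p - 2) \<le> x * m powr (p - 2)"
    using assms by (simp add: mult_right_mono)
  moreover have "m * m powr (p - 2) = m powr (p - 1)"
    using powr_eq_mult_powr_diff[OF \<open>0 < m\<close>, of "p - 1" 1] \<open>0 < m\<close> by simp
  ultimately show ?thesis
    by linarith
qed

(* Below the level cutoff p n * max v the profile is steep, and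
   lam <= eps_ratio p n * (max v)^(p-2) forces (max v)^(p-2) <= (amplitude_bound p n)^2. *)
definition cutoff :: "real \<Rightarrow> nat \<Rightarrow> real" where
  "cutoff p n = (1 / (4 * 4 ^ n)) powr (1 / p)"

definition eps_ratio :: "real \<Rightarrow> nat \<Rightarrow> real" where
  "eps_ratio p n = min (cutoff p n powr (p - 2) / 2) (1 / (4 * p * 4 ^ n))"

definition amplitude_bound :: "real \<Rightarrow> nat \<Rightarrow> real" where
  "amplitude_bound p n = 2 * (sqrt (2 ^ (n + 2) / cutoff p n powr (p - 1)) + sqrt (p * 4 ^ n))"

lemma eps_ratio_pos: "0 < p \<Longrightarrow> 0 < eps_ratio p n"
  by (simp add: eps_ratio_def cutoff_def)

lemma cutoff_pos: "0 < cutoff p n"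
  by (simp add: cutoff_def)

lemma cutoff_le_1: "0 < p \<Longrightarrow> cutoff p n \<le> 1"
proof -
  have "(1::real) \<le> 4 * 4 ^ n"
    using one_le_power[of "4::real" n] by linarith
  then show "0 < p \<Longrightarrow> cutoff p n \<le> 1"
    unfolding cutoff_def by (intro powr_le1) auto
qed

lemma cutoff_powr: "0 < p \<Longrightarrow> cutoff p n powr p = 1 / (4 * 4 ^ n)"
  by (simp add: cutoff_def powr_powr)

lemma eps_ratio_conditions:
  fixes M lam :: real
  assumes "2 < p" "0 < M" "lam \<le> eps_ratio p n * M powr (p - 2)"
  shows "lam \<le> (cutoff p n * M) powr (p - 2) / 2"
    and "lam * M\<^sup>2 \<le> M powr p / (4 * p * 4 ^ n)"
    and "(cutoff p n * M) powr p \<le> M powr p / (4 * 4 ^ n)"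
proof -
  have eps1: "eps_ratio p n * M powr (p - 2) \<le> cutoff p n powr (p - 2) / 2 * M powr (p - 2)"
    and eps2: "eps_ratio p n * M powr (p - 2) \<le> 1 / (4 * p * 4 ^ n) * M powr (p - 2)"
    by (intro mult_right_mono; simp add: eps_ratio_def)+
  have "lam \<le> cutoff p n powr (p - 2) / 2 * M powr (p - 2)"
    using assms(3) eps1 by linarith
  also have "\<dots> = (cutoff p n * M) powr (p - 2) / 2"
    using cutoff_pos \<open>0 < M\<close> by (simp add: powr_mult)
  finally show "lam \<le> (cutoff p n * M) powr (p - 2) / 2" .
  have "lam * M\<^sup>2 \<le> 1 / (4 * p * 4 ^ n) * M powr (p - 2) * M\<^sup>2"
    using assms(3) eps2 by (intro mult_right_mono) auto
  also have "\<dots> = M powr p / (4 * p * 4 ^ n)"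
    using powr_eq_mult_powr_diff[OF \<open>0 < M\<close>, of p 2] \<open>0 < M\<close> by (simp add: powr_numeral)
  finally show "lam * M\<^sup>2 \<le> M powr p / (4 * p * 4 ^ n)" .
  show "(cutoff p n * M) powr p \<le> M powr p / (4 * 4 ^ n)"
    using assms cutoff_pos by (simp add: powr_mult cutoff_powr)
qed

lemma amplitude_bound_eq:
  fixes M :: real
  assumes "2 < p" "0 < M"
  shows "2 * (sqrt (2 * M / ((cutoff p n * M) powr (p - 1) / 2 ^ (n + 1))) + M / sqrt (M powr p / (p * 4 ^ n)))
    = amplitude_bound p n / sqrt (M powr (p - 2))"
proof -
  define Q where "Q = M powr (p - 2)"
  have "0 < Q"
    using assms by (simp add: Q_def)
  have "M powr (p - 1) = M * Q" "M powr p = M\<^sup>2 * Q"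
    using powr_eq_mult_powr_diff[OF \<open>0 < M\<close>, of "p - 1" 1]
      powr_eq_mult_powr_diff[OF \<open>0 < M\<close>, of p 2] \<open>0 < M\<close>
    by (simp_all add: Q_def powr_numeral)
  moreover have "0 < cutoff p n"
    by (rule cutoff_pos)
  ultimately have "2 * M / ((cutoff p n * M) powr (p - 1) / 2 ^ (n + 1)) = 2 ^ (n + 2) / cutoff p n powr (p - 1) / Q"
    and "M / sqrt (M powr p / (p * 4 ^ n)) = sqrt (p * 4 ^ n) / sqrt Q"
    using \<open>0 < M\<close> \<open>0 < Q\<close> assms(1)
    by (simp_all add: powr_mult real_sqrt_divide real_sqrt_mult field_simps)
  then show ?thesis
    by (simp add: amplitude_bound_def Q_def real_sqrt_divide real_sqrt_mult add_divide_distrib)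
qed

(* v is the radial profile of a solution in dimension n + 1 and r0 a maximum point of v. *)
locale radial_profile =
  fixes n :: nat and p lam :: real and v v' v'' :: "real \<Rightarrow> real" and r0 :: real
  assumes p: "2 < p" and lam: "0 < lam"
    and cont: "continuous_on {1..2} v" and zero_left: "v 1 = 0" and zero_right: "v 2 = 0"
    and pos: "\<And>r. 1 < r \<Longrightarrow> r < 2 \<Longrightarrow> 0 < v r"
    and deriv1: "\<And>r. 1 < r \<Longrightarrow> r < 2 \<Longrightarrow> (v has_real_derivative v' r) (at r)"
    and deriv2: "\<And>r. 1 < r \<Longrightarrow> r < 2 \<Longrightarrow> (v' has_real_derivative v'' r) (at r)"
    and ode: "\<And>r. 1 < r \<Longrightarrow> r < 2 \<Longrightarrow> v'' r + n * v' r / r = lam * v r - v r powr (p - 1)"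
    and r0: "1 < r0" "r0 < 2" and max: "\<And>r. 1 \<le> r \<Longrightarrow> r \<le> 2 \<Longrightarrow> v r \<le> v r0"
begin

lemma max_pos: "0 < v r0"
  using pos r0 by auto

lemma local_max:
  obtains d where "0 < d" "\<And>y. \<bar>r0 - y\<bar> < d \<Longrightarrow> 1 < y \<and> y < 2 \<and> v y \<le> v r0"
proof
  show "0 < min (r0 - 1) (2 - r0)"
    using r0 by auto
  fix y assume "\<bar>r0 - y\<bar> < min (r0 - 1) (2 - r0)"
  then show "1 < y \<and> y < 2 \<and> v y \<le> v r0"
    using max[of y] by (auto simp: abs_less_iff)
qed

lemma deriv_at_max: "v' r0 = 0"
  using local_max by (metis DERIV_local_max deriv1 r0)

lemma lam_le_max_powr: "lam \<le> v r0 powr (p - 2)"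
proof -
  obtain d where "0 < d" and d: "\<And>y. \<bar>r0 - y\<bar> < d \<Longrightarrow> 1 < y \<and> y < 2 \<and> v y \<le> v r0"
    using local_max by blast
  have "v'' r0 \<le> 0"
    using local_max_second_deriv_nonpos[OF \<open>0 < d\<close> _ deriv2[OF r0]] deriv1 d by blast
  moreover have "v'' r0 = v r0 * (lam - v r0 powr (p - 2))"
    using ode[OF r0] deriv_at_max powr_eq_mult_powr_diff[OF max_pos, of "p - 1" 1] max_pos
    by (simp add: algebra_simps)
  ultimately show ?thesis
    using max_pos by (simp add: mult_le_0_iff)
qed

definition energy :: "real \<Rightarrow> real" where
  "energy r = (v' r)\<^sup>2 / 2 + v r powr p / p - lam * (v r)\<^sup>2 / 2"

lemma energy_deriv:
  assumes "1 < r" "r < 2"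
  shows "(energy has_real_derivative - (n * (v' r)\<^sup>2 / r)) (at r)"
proof -
  have D: "(energy has_real_derivative v' r * (v'' r + v r powr (p - 1) - lam * v r)) (at r)"
    unfolding energy_def using deriv1[OF assms] deriv2[OF assms] pos[OF assms] p
    by (auto intro!: derivative_eq_intros simp: algebra_simps)
  have "v'' r + v r powr (p - 1) - lam * v r = - (n * v' r / r)"
    using ode[OF assms] by linarith
  with D show ?thesis
    by (simp add: power2_eq_square mult.left_commute)
qed

lemma energy_at_max: "energy r0 = v r0 powr p / p - lam * (v r0)\<^sup>2 / 2"
  by (simp add: energy_def deriv_at_max)

definition flux :: "real \<Rightarrow> real" where
  "flux r = r ^ n * v' r"

lemma flux_deriv:
  assumes "1 < r" "r < 2"
  shows "(flux has_real_derivative r ^ n * (lam * v r - v r powr (p - 1))) (at r)"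
proof -
  have D: "(flux has_real_derivative n * r ^ (n - 1) * v' r + r ^ n * v'' r) (at r)"
    unfolding flux_def using deriv1[OF assms] deriv2[OF assms]
    by (auto intro!: derivative_eq_intros)
  have "n * r ^ (n - 1) = r ^ n * (n / r)"
    using assms by (cases n) auto
  moreover have "lam * v r - v r powr (p - 1) = v'' r + n * v' r / r"
    using ode[OF assms] by simp
  ultimately have "n * r ^ (n - 1) * v' r + r ^ n * v'' r = r ^ n * (lam * v r - v r powr (p - 1))"
    by (simp add: algebra_simps)
  with D show ?thesis
    by simp
qed

lemma flux_diff_le:
  assumes "0 < m" "lam \<le> m powr (p - 2) / 2"
    and "1 < x" "x \<le> y" "y < 2" "\<forall>s\<in>{x..y}. m \<le> v s"
  shows "flux y - flux x \<le> - (m powr (p - 1) / 2) * (y - x)"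
proof -
  have "flux y - flux x \<le> - (m powr (p - 1) / 2) * y - - (m powr (p - 1) / 2) * x"
  proof (rule diff_le_diff_of_deriv_le[OF \<open>x \<le> y\<close>])
    fix s assume s: "x < s" "s < y"
    then have "1 < s" "s < 2"
      using assms by auto
    have reaction: "lam * v s - v s powr (p - 1) \<le> - (m powr (p - 1) / 2)"
      using reaction_le_above_level[of p m "v s" lam] assms s p by auto
    moreover have "0 < m powr (p - 1)"
      using \<open>0 < m\<close> by simp
    ultimately have "lam * v s - v s powr (p - 1) \<le> 0"
      by linarith
    then have "s ^ n * (lam * v s - v s powr (p - 1)) \<le> lam * v s - v s powr (p - 1)"
      using mult_right_mono_neg[of 1 "s ^ n"] \<open>1 < s\<close> by simp
    with reaction show "s ^ n * (lam * v s - v s powr (p - 1)) \<le> - (m powr (p - 1) / 2)"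
      by linarith
  next
    show "continuous_on {x..y} flux"
      using assms by (intro continuous_at_imp_continuous_on ballI DERIV_isCont[OF flux_deriv]) auto
    show "(flux has_real_derivative s ^ n * (lam * v s - v s powr (p - 1))) (at s)"
      if "x < s" "s < y" for s
      using flux_deriv that assms by auto
  qed (auto intro!: derivative_eq_intros continuous_intros)
  then show ?thesis
    by (simp add: right_diff_distrib)
qed

lemma deriv_le_right_of_max:
  assumes "0 < m" "lam \<le> m powr (p - 2) / 2" "r0 \<le> r" "r < 2" "\<forall>s\<in>{r0..r}. m \<le> v s"
  shows "v' r \<le> - (m powr (p - 1) / 2 ^ (n + 1)) * (r - r0)"
proof -
  have flux: "r ^ n * v' r \<le> - (m powr (p - 1) / 2 * (r - r0))"
    using flux_diff_le[of m r0 r] assms r0 by (simp add: flux_def deriv_at_max)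
  moreover have "0 \<le> m powr (p - 1) / 2 * (r - r0)"
    using assms by simp
  ultimately have "r ^ n * v' r \<le> 0"
    by linarith
  moreover have "0 < r ^ n"
    using r0 assms by simp
  ultimately have "v' r \<le> 0"
    by (simp add: mult_le_0_iff)
  then have "2 ^ n * v' r \<le> r ^ n * v' r"
    using assms r0 by (intro mult_right_mono_neg power_mono) auto
  with flux show ?thesis
    by (simp add: field_simps)
qed

lemma deriv_ge_left_of_max:
  assumes "0 < m" "lam \<le> m powr (p - 2) / 2" "1 < r" "r \<le> r0" "\<forall>s\<in>{r..r0}. m \<le> v s"
  shows "m powr (p - 1) / 2 ^ (n + 1) * (r0 - r) \<le> v' r"
proof -
  have flux: "m powr (p - 1) / 2 * (r0 - r) \<le> r ^ n * v' r"
    using flux_diff_le[of m r r0] assms r0 by (simp add: flux_def deriv_at_max)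
  moreover have "0 \<le> m powr (p - 1) / 2 * (r0 - r)"
    using assms by simp
  ultimately have "0 \<le> r ^ n * v' r"
    by linarith
  moreover have "0 < r ^ n"
    using assms by simp
  ultimately have "0 \<le> v' r"
    by (simp add: zero_le_mult_iff)
  then have "r ^ n * v' r \<le> 2 ^ n * v' r"
    using assms r0 by (intro mult_right_mono power_mono) auto
  with flux show ?thesis
    by (simp add: field_simps)
qed

lemma energy_cont: "1 < x \<Longrightarrow> y < 2 \<Longrightarrow> continuous_on {x..y} energy"
  by (intro continuous_at_imp_continuous_on ballI DERIV_isCont[OF energy_deriv]) auto

(* The energy is nonincreasing, which bounds it from below only left of r0; to the right,
   the weight r^(2n) compensates the damping term n v' / r. *)
definition weighted_energy :: "real \<Rightarrow> real" where
  "weighted_energy r = r ^ (2 * n) * (energy r + lam * (v r0)\<^sup>2 / 2)"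

lemma weighted_energy_mono:
  assumes "1 < x" "x \<le> y" "y < 2"
  shows "weighted_energy x \<le> weighted_energy y"
proof (rule DERIV_nonneg_imp_increasing_open[OF \<open>x \<le> y\<close>])
  fix s assume "x < s" "s < y"
  then have s: "1 < s" "s < 2"
    using assms by auto
  have D: "(weighted_energy has_real_derivative (2 * n) * s ^ (2 * n - 1) * (energy s + lam * (v r0)\<^sup>2 / 2)
      - s ^ (2 * n) * (n * (v' s)\<^sup>2 / s)) (at s)"
    unfolding weighted_energy_def[abs_def] using energy_deriv[OF s]
    by (auto intro!: derivative_eq_intros simp: algebra_simps)
  have power_pred: "(2 * n) * s ^ (2 * n - 1) = s ^ (2 * n) * (2 * n / s)"
    using s by (cases n) auto
  have "(2 * n) * s ^ (2 * n - 1) * (energy s + lam * (v r0)\<^sup>2 / 2) - s ^ (2 * n) * (n * (v' s)\<^sup>2 / s)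
      = s ^ (2 * n) * (n / s) * (2 * (v s powr p / p) + lam * ((v r0)\<^sup>2 - (v s)\<^sup>2))"
    unfolding power_pred using s p by (simp add: energy_def field_simps)
  moreover have "(v s)\<^sup>2 \<le> (v r0)\<^sup>2"
    using pos[OF s] max[of s] s by (intro power_mono) auto
  then have "0 \<le> s ^ (2 * n) * (n / s) * (2 * (v s powr p / p) + lam * ((v r0)\<^sup>2 - (v s)\<^sup>2))"
    using s lam p by (intro mult_nonneg_nonneg add_nonneg_nonneg) auto
  ultimately show "\<exists>y. (weighted_energy has_real_derivative y) (at s) \<and> 0 \<le> y"
    using D by metis
qed (use energy_cont assms in \<open>auto simp: weighted_energy_def[abs_def] intro!: continuous_intros\<close>)

lemma energy_lower_bound:
  assumes r: "1 < r" "r < 2"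
  shows "v r0 powr p / (p * 4 ^ n) \<le> energy r + lam * (v r0)\<^sup>2 / 2"
proof (cases "r \<le> r0")
  case True
  have "energy r0 \<le> energy r"
  proof (rule DERIV_nonpos_imp_decreasing_open[OF True])
    fix s assume "r < s" "s < r0"
    then show "\<exists>y. (energy has_real_derivative y) (at s) \<and> y \<le> 0"
      using energy_deriv[of s] r r0 by force
  qed (use energy_cont r r0 in auto)
  moreover have "v r0 powr p / (p * 4 ^ n) \<le> v r0 powr p / p"
    using p by (intro divide_left_mono) auto
  ultimately show ?thesis
    by (simp add: energy_at_max)
next
  case False
  have "v r0 powr p / p \<le> weighted_energy r0"
    using r0 p mult_right_mono[of 1 "r0 ^ (2 * n)" "v r0 powr p / p"]
    by (simp add: weighted_energy_def energy_at_max)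
  also have "\<dots> \<le> weighted_energy r"
    using False r r0 by (intro weighted_energy_mono) auto
  finally have bound: "v r0 powr p / p \<le> r ^ (2 * n) * (energy r + lam * (v r0)\<^sup>2 / 2)"
    by (simp add: weighted_energy_def)
  moreover have "0 < v r0 powr p / p"
    using max_pos p by simp
  ultimately have "0 < energy r + lam * (v r0)\<^sup>2 / 2"
    using r by (smt (verit) zero_less_mult_iff zero_less_power)
  moreover have "r ^ (2 * n) \<le> 4 ^ n"
    using r power_mono[of r 2 "2 * n"] by (simp add: power_mult)
  ultimately have "v r0 powr p / p \<le> 4 ^ n * (energy r + lam * (v r0)\<^sup>2 / 2)"
    using bound mult_right_mono[of "r ^ (2 * n)" "4 ^ n" "energy r + lam * (v r0)\<^sup>2 / 2"]
    by linarith
  then show ?thesis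
    using p by (simp add: field_simps)
qed

lemma steep_below_level:
  assumes level: "m powr p \<le> v r0 powr p / (4 * 4 ^ n)"
    and small: "lam * (v r0)\<^sup>2 \<le> v r0 powr p / (4 * p * 4 ^ n)"
    and r: "1 < r" "r < 2" and below: "v r \<le> m"
  shows "sqrt (v r0 powr p / (p * 4 ^ n)) \<le> \<bar>v' r\<bar>"
proof -
  define A where "A = v r0 powr p / (p * 4 ^ n)"
  have "0 \<le> A"
    using p by (simp add: A_def)
  have "v r powr p \<le> m powr p"
    using pos[OF r] below p by (intro powr_mono2) auto
  with level have "v r powr p \<le> v r0 powr p / (4 * 4 ^ n)"
    by linarith
  then have "v r powr p / p \<le> A / 4"
    using p by (simp add: A_def field_simps)
  moreover have "lam * (v r0)\<^sup>2 / 2 \<le> A / 8"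
    using small by (simp add: A_def field_simps)
  moreover have "0 \<le> lam * (v r)\<^sup>2"
    using lam by simp
  then have "A \<le> (v' r)\<^sup>2 / 2 + v r powr p / p + lam * (v r0)\<^sup>2 / 2"
    using energy_lower_bound[OF r] unfolding A_def energy_def by linarith
  ultimately have "A \<le> (v' r)\<^sup>2"
    using \<open>0 \<le> A\<close> by linarith
  then show ?thesis
    unfolding A_def using real_sqrt_le_mono by fastforce
qed

lemma max_to_right_end_le:
  assumes "0 < m" "m \<le> v r0" "lam \<le> m powr (p - 2) / 2" "0 < \<kappa>"
    and steep: "\<And>r. 1 < r \<Longrightarrow> r < 2 \<Longrightarrow> v r \<le> m \<Longrightarrow> \<kappa> \<le> \<bar>v' r\<bar>"
  shows "2 - r0 \<le> sqrt (2 * v r0 / (m powr (p - 1) / 2 ^ (n + 1))) + m / \<kappa>"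
proof (rule length_to_zero_le[where w = v'])
  show "continuous_on {r0..2} v"
    using r0 by (auto intro: continuous_on_subset[OF cont])
  show "(v has_real_derivative v' r) (at r)" "isCont v' r" if "r0 \<le> r" "r < 2" for r
    using that r0 deriv1 DERIV_isCont[OF deriv2] by auto
  show "v' r \<le> - (m powr (p - 1) / 2 ^ (n + 1)) * (r - r0)"
    if "r0 \<le> r" "r < 2" "\<forall>s\<in>{r0..r}. m \<le> v s" for r
    using deriv_le_right_of_max[OF \<open>0 < m\<close> assms(3) that] .
  show "\<kappa> \<le> \<bar>v' r\<bar>" if "r0 \<le> r" "r < 2" "v r \<le> m" for r
    using steep that r0 by auto
qed (use r0 zero_right assms in auto)

lemma max_to_left_end_le:
  assumes "0 < m" "m \<le> v r0" "lam \<le> m powr (p - 2) / 2" "0 < \<kappa>"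
    and steep: "\<And>r. 1 < r \<Longrightarrow> r < 2 \<Longrightarrow> v r \<le> m \<Longrightarrow> \<kappa> \<le> \<bar>v' r\<bar>"
  shows "r0 - 1 \<le> sqrt (2 * v r0 / (m powr (p - 1) / 2 ^ (n + 1))) + m / \<kappa>"
proof -
  have "(2 * r0 - 1) - r0 \<le> sqrt (2 * v (2 * r0 - r0) / (m powr (p - 1) / 2 ^ (n + 1))) + m / \<kappa>"
  proof (rule length_to_zero_le[where v = "\<lambda>s. v (2 * r0 - s)" and w = "\<lambda>s. - v' (2 * r0 - s)"])
    show "continuous_on {r0..2 * r0 - 1} (\<lambda>s. v (2 * r0 - s))"
      by (rule continuous_on_compose2[OF cont]) (use r0 in \<open>auto intro!: continuous_intros\<close>)
    show "((\<lambda>s. v (2 * r0 - s)) has_real_derivative - v' (2 * r0 - r)) (at r)"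
      if "r0 \<le> r" "r < 2 * r0 - 1" for r
    proof -
      have "((\<lambda>s. 2 * r0 - s) has_real_derivative -1) (at r)"
        by (auto intro!: derivative_eq_intros)
      from DERIV_chain'[OF this deriv1[of "2 * r0 - r"]] that r0 show ?thesis
        by simp
    qed
    show "isCont (\<lambda>s. - v' (2 * r0 - s)) r" if "r0 \<le> r" "r < 2 * r0 - 1" for r
      using isCont_o2[where f = "\<lambda>s. 2 * r0 - s" and a = r and g = v'] DERIV_isCont[OF deriv2] that r0
      by (auto intro: isCont_minus)
    show "- v' (2 * r0 - r) \<le> - (m powr (p - 1) / 2 ^ (n + 1)) * (r - r0)"
      if "r0 \<le> r" "r < 2 * r0 - 1" and reflected: "\<forall>s\<in>{r0..r}. m \<le> v (2 * r0 - s)" for r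
    proof -
      have "m \<le> v s" if "2 * r0 - r \<le> s" "s \<le> r0" for s
        using reflected[rule_format, of "2 * r0 - s"] that by simp
      then show ?thesis
        using deriv_ge_left_of_max[OF \<open>0 < m\<close> assms(3), of "2 * r0 - r"] that by simp
    qed
    show "\<kappa> \<le> \<bar>- v' (2 * r0 - r)\<bar>" if "r0 \<le> r" "r < 2 * r0 - 1" "v (2 * r0 - r) \<le> m" for r
      using steep that r0 by auto
  qed (use r0 zero_left assms in auto)
  then show ?thesis
    by simp
qed

lemma max_powr_le_amplitude_bound:
  assumes small: "lam \<le> eps_ratio p n * v r0 powr (p - 2)"
  shows "v r0 powr (p - 2) \<le> (amplitude_bound p n)\<^sup>2"
proof -
  define m \<kappa> where "m = cutoff p n * v r0" and "\<kappa> = sqrt (v r0 powr p / (p * 4 ^ n))"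
  have "0 < m" "m \<le> v r0" "0 < \<kappa>"
    using max_pos p cutoff_pos[of p n] cutoff_le_1[of p n] by (auto simp: m_def \<kappa>_def)
  have lam_level: "lam \<le> m powr (p - 2) / 2"
    and lam_small: "lam * (v r0)\<^sup>2 \<le> v r0 powr p / (4 * p * 4 ^ n)"
    and level: "m powr p \<le> v r0 powr p / (4 * 4 ^ n)"
    using eps_ratio_conditions[OF p max_pos small] by (simp_all add: m_def)
  have steep: "\<kappa> \<le> \<bar>v' r\<bar>" if "1 < r" "r < 2" "v r \<le> m" for r
    using steep_below_level[OF level lam_small that] by (simp add: \<kappa>_def)
  have "2 - r0 \<le> sqrt (2 * v r0 / (m powr (p - 1) / 2 ^ (n + 1))) + m / \<kappa>"
    by (rule max_to_right_end_le[OF \<open>0 < m\<close> \<open>m \<le> v r0\<close> lam_level \<open>0 < \<kappa>\<close> steep])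
  moreover have "r0 - 1 \<le> sqrt (2 * v r0 / (m powr (p - 1) / 2 ^ (n + 1))) + m / \<kappa>"
    by (rule max_to_left_end_le[OF \<open>0 < m\<close> \<open>m \<le> v r0\<close> lam_level \<open>0 < \<kappa>\<close> steep])
  moreover have "m / \<kappa> \<le> v r0 / \<kappa>"
    using \<open>m \<le> v r0\<close> \<open>0 < \<kappa>\<close> by (simp add: divide_right_mono)
  ultimately have "1 \<le> 2 * (sqrt (2 * v r0 / (m powr (p - 1) / 2 ^ (n + 1))) + v r0 / \<kappa>)"
    by argo
  also have "\<dots> = amplitude_bound p n / sqrt (v r0 powr (p - 2))"
    unfolding m_def \<kappa>_def using amplitude_bound_eq[OF p max_pos] .
  finally have "sqrt (v r0 powr (p - 2)) \<le> amplitude_bound p n"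
    using max_pos by (simp add: field_simps)
  then have "(sqrt (v r0 powr (p - 2)))\<^sup>2 \<le> (amplitude_bound p n)\<^sup>2"
    by (intro power_mono) auto
  then show ?thesis
    by simp
qed

lemma ratio_le_1: "lam / v r0 powr (p - 2) \<le> 1"
  using lam_le_max_powr max_pos by simp

lemma eps_ratio_le_ratio:
  assumes "eps_ratio p n * (amplitude_bound p n)\<^sup>2 \<le> lam"
  shows "eps_ratio p n \<le> lam / v r0 powr (p - 2)"
proof (rule ccontr)
  assume "\<not> ?thesis"
  then have "lam < eps_ratio p n * v r0 powr (p - 2)"
    using max_pos by (simp add: field_simps)
  then have "v r0 powr (p - 2) \<le> (amplitude_bound p n)\<^sup>2"
    by (intro max_powr_le_amplitude_bound) simp
  then have "eps_ratio p n * v r0 powr (p - 2) \<le> eps_ratio p n * (amplitude_bound p n)\<^sup>2"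
    using eps_ratio_pos[of p n] p by (intro mult_left_mono) auto
  with assms \<open>lam < _\<close> show False
    by linarith
qed

end

section \<open>Radial functions on the annulus\<close>

lemma has_real_derivative_along_line:
  fixes f :: "'a::real_normed_vector \<Rightarrow> real"
  assumes "(f has_derivative D) (at (x + t *\<^sub>R i))"
  shows "((\<lambda>t. f (x + t *\<^sub>R i)) has_real_derivative D i) (at t)"
proof -
  have "((\<lambda>t. f (x + t *\<^sub>R i)) has_derivative (\<lambda>h. D (h *\<^sub>R i))) (at t)"
    by (rule has_derivative_compose[where f = "\<lambda>t. x + t *\<^sub>R i" and g = f, OF _ assms]) (auto intro!: derivative_eq_intros)
  moreover have "(\<lambda>h. D (h *\<^sub>R i)) = (*) (D i)"
    using linear_scale[OF has_derivative_linear[OF assms]] by (auto simp: mult.commute)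
  ultimately show ?thesis
    by (simp add: has_field_derivative_def)
qed

lemma has_real_derivative_along_line_blinfun:
  fixes g :: "'a::real_normed_vector \<Rightarrow> 'a \<Rightarrow>\<^sub>L real"
  assumes "(g has_derivative blinfun_apply D) (at (x + t *\<^sub>R i))"
  shows "((\<lambda>t. g (x + t *\<^sub>R i) j) has_real_derivative D i j) (at t)"
  using has_real_derivative_along_line[OF bounded_linear.has_derivative[OF blinfun.bounded_linear_left assms]] .

lemma second_directional_derivative:
  fixes f :: "'a::real_normed_vector \<Rightarrow> real"
  assumes "open S" "x \<in> S"
    and deriv1: "\<And>y. y \<in> S \<Longrightarrow> (f has_derivative blinfun_apply (f' y)) (at y)"
    and deriv2: "(f' has_derivative blinfun_apply D) (at x)"
  shows "deriv (deriv (\<lambda>t. f (x + t *\<^sub>R i))) 0 = D i i"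
proof -
  define T where "T = {t. x + t *\<^sub>R i \<in> S}"
  have "open T"
    unfolding T_def by (rule open_vimage[OF \<open>open S\<close>, unfolded vimage_def]) (intro continuous_intros)
  have "0 \<in> T"
    using \<open>x \<in> S\<close> by (simp add: T_def)
  have "((\<lambda>t. f' (x + t *\<^sub>R i) i) has_real_derivative D i i) (at 0)"
    using has_real_derivative_along_line_blinfun[of f' D x 0 i i] deriv2 by simp
  then have "(deriv (\<lambda>t. f (x + t *\<^sub>R i)) has_real_derivative D i i) (at 0)"
  proof (rule has_field_derivative_transform_within_open[OF _ \<open>open T\<close> \<open>0 \<in> T\<close>])
    show "f' (x + t *\<^sub>R i) i = deriv (\<lambda>t. f (x + t *\<^sub>R i)) t" if "t \<in> T" for t
      using has_real_derivative_along_line[OF deriv1, of x t i] that by (simp add: T_def DERIV_imp_deriv)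
  qed
  then show ?thesis
    by (rule DERIV_imp_deriv)
qed

lemma laplacian_eq_sum_second_derivatives:
  fixes f :: "'a::euclidean_space \<Rightarrow> real"
  assumes "open S" "x \<in> S"
    and "\<And>y. y \<in> S \<Longrightarrow> (f has_derivative blinfun_apply (f' y)) (at y)"
    and "(f' has_derivative blinfun_apply D) (at x)"
  shows "laplacian f x = (\<Sum>i\<in>Basis. D i i)"
  unfolding laplacian_def using second_directional_derivative[OF assms] by simp

lemma open_annulus: "open (annulus :: 'a::euclidean_space set)"
  unfolding annulus_def by (intro open_Collect_conj open_Collect_less continuous_intros)

lemma norm_add_orthogonal_Basis:
  assumes "b \<in> Basis" "i \<in> Basis" "i \<noteq> b"
  shows "norm (s *\<^sub>R b + t *\<^sub>R i) = sqrt (s\<^sup>2 + t\<^sup>2)"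
proof -
  have "inner b i = 0" "inner i b = 0"
    using assms by (auto simp: inner_Basis)
  then have "inner (s *\<^sub>R b + t *\<^sub>R i) (s *\<^sub>R b + t *\<^sub>R i) = s\<^sup>2 + t\<^sup>2"
    using assms by (simp add: inner_add_left inner_add_right power2_eq_square)
  then show ?thesis
    by (simp add: norm_eq_sqrt_inner)
qed

lemma DERIV_sqrt_sum_squares:
  fixes s t :: real
  assumes "s \<noteq> 0"
  shows "((\<lambda>t. sqrt (s\<^sup>2 + t\<^sup>2)) has_real_derivative t / sqrt (s\<^sup>2 + t\<^sup>2)) (at t)"
proof -
  have "0 < s\<^sup>2 + t\<^sup>2"
    using assms by (simp add: add_pos_nonneg)
  then have "((\<lambda>t. sqrt (s\<^sup>2 + t\<^sup>2)) has_real_derivative inverse (sqrt (s\<^sup>2 + t\<^sup>2)) / 2 * (2 * t)) (at t)"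
    by (intro DERIV_chain'[OF _ DERIV_real_sqrt]) (auto intro!: derivative_eq_intros)
  then show ?thesis
    by (simp add: field_simps)
qed

lemma DERIV_times_cosine_at_0:
  fixes h :: "real \<Rightarrow> real"
  assumes "0 < s" "(h has_real_derivative D) (at s)"
  shows "((\<lambda>t. h (sqrt (s\<^sup>2 + t\<^sup>2)) * (t / sqrt (s\<^sup>2 + t\<^sup>2))) has_real_derivative h s / s) (at 0)"
proof -
  have radius: "((\<lambda>t. sqrt (s\<^sup>2 + t\<^sup>2)) has_real_derivative 0) (at 0)"
    using DERIV_sqrt_sum_squares[of s 0] assms(1) by simp
  moreover have "(h has_real_derivative D) (at (sqrt (s\<^sup>2 + 0\<^sup>2)))"
    using assms by simp
  ultimately have "((\<lambda>t. h (sqrt (s\<^sup>2 + t\<^sup>2))) has_real_derivative D * 0) (at 0)"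
    by (rule DERIV_chain')
  moreover have "((\<lambda>t. t / sqrt (s\<^sup>2 + t\<^sup>2)) has_real_derivative 1 / s) (at 0)"
    using DERIV_divide[OF DERIV_ident radius] assms(1) by simp
  ultimately have "((\<lambda>t. h (sqrt (s\<^sup>2 + t\<^sup>2)) * (t / sqrt (s\<^sup>2 + t\<^sup>2))) has_real_derivative
      D * 0 * (0 / sqrt (s\<^sup>2 + 0\<^sup>2)) + 1 / s * h (sqrt (s\<^sup>2 + 0\<^sup>2))) (at 0)"
    by (rule DERIV_mult)
  then show ?thesis
    using assms(1) by simp
qed

locale radial_C2_on_annulus =
  fixes u :: "'a::euclidean_space \<Rightarrow> real" and f' :: "'a \<Rightarrow> 'a \<Rightarrow>\<^sub>L real"
    and f'' :: "'a \<Rightarrow> 'a \<Rightarrow>\<^sub>L ('a \<Rightarrow>\<^sub>L real)" and b :: 'a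
  assumes deriv1: "\<And>x. x \<in> annulus \<Longrightarrow> (u has_derivative blinfun_apply (f' x)) (at x)"
    and deriv2: "\<And>x. x \<in> annulus \<Longrightarrow> (f' has_derivative blinfun_apply (f'' x)) (at x)"
    and radial: "\<And>x y. norm x = norm y \<Longrightarrow> u x = u y"
    and b: "b \<in> Basis"
begin

definition profile :: "real \<Rightarrow> real" where
  "profile s = u (s *\<^sub>R b)"

definition profile' :: "real \<Rightarrow> real" where
  "profile' s = f' (s *\<^sub>R b) b"

definition profile'' :: "real \<Rightarrow> real" where
  "profile'' s = f'' (s *\<^sub>R b) b b"

lemma scaleR_Basis_in_annulus: "1 < s \<Longrightarrow> s < 2 \<Longrightarrow> s *\<^sub>R b \<in> annulus"
  using b by (simp add: annulus_def)

lemma eq_profile_norm: "u x = profile (norm x)"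
  unfolding profile_def using b by (intro radial) simp

lemma profile_deriv1: "1 < s \<Longrightarrow> s < 2 \<Longrightarrow> (profile has_real_derivative profile' s) (at s)"
  using has_real_derivative_along_line[of u "f' (s *\<^sub>R b)" 0 s b] deriv1[OF scaleR_Basis_in_annulus]
  by (simp add: profile_def[abs_def] profile'_def)

lemma profile_deriv2: "1 < s \<Longrightarrow> s < 2 \<Longrightarrow> (profile' has_real_derivative profile'' s) (at s)"
  using has_real_derivative_along_line_blinfun[of f' "f'' (s *\<^sub>R b)" 0 s b b] deriv2[OF scaleR_Basis_in_annulus]
  by (simp add: profile'_def[abs_def] profile''_def)

lemma first_derivative_orthogonal:
  assumes "0 < s" and i: "i \<in> Basis" "i \<noteq> b" and t: "s *\<^sub>R b + t *\<^sub>R i \<in> annulus"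
  shows "f' (s *\<^sub>R b + t *\<^sub>R i) i = profile' (sqrt (s\<^sup>2 + t\<^sup>2)) * (t / sqrt (s\<^sup>2 + t\<^sup>2))"
proof -
  have norm: "norm (s *\<^sub>R b + t *\<^sub>R i) = sqrt (s\<^sup>2 + t\<^sup>2)" for t
    using norm_add_orthogonal_Basis[OF b i] .
  then have "1 < sqrt (s\<^sup>2 + t\<^sup>2)" "sqrt (s\<^sup>2 + t\<^sup>2) < 2" "s \<noteq> 0"
    using t \<open>0 < s\<close> by (auto simp: annulus_def)
  have "((\<lambda>t. profile (sqrt (s\<^sup>2 + t\<^sup>2))) has_real_derivative
      profile' (sqrt (s\<^sup>2 + t\<^sup>2)) * (t / sqrt (s\<^sup>2 + t\<^sup>2))) (at t)"
    using DERIV_chain'[OF DERIV_sqrt_sum_squares[OF \<open>s \<noteq> 0\<close>] profile_deriv1] \<open>1 < _\<close> \<open>_ < 2\<close> by simp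
  moreover have "((\<lambda>t. profile (sqrt (s\<^sup>2 + t\<^sup>2))) has_real_derivative f' (s *\<^sub>R b + t *\<^sub>R i) i) (at t)"
    using has_real_derivative_along_line[OF deriv1[OF t]] by (simp add: eq_profile_norm[of "_ + _"] norm)
  ultimately show ?thesis
    by (rule DERIV_unique[symmetric])
qed

lemma second_derivative_orthogonal:
  assumes s: "1 < s" "s < 2" and i: "i \<in> Basis" "i \<noteq> b"
  shows "f'' (s *\<^sub>R b) i i = profile' s / s"
proof -
  define T where "T = {t. s *\<^sub>R b + t *\<^sub>R i \<in> annulus}"
  have "open T"
    unfolding T_def by (rule open_vimage[OF open_annulus, unfolded vimage_def]) (intro continuous_intros)
  have "s *\<^sub>R b \<in> annulus"
    using scaleR_Basis_in_annulus[OF s] .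
  then have "0 \<in> T"
    by (simp add: T_def)
  have "((\<lambda>t. profile' (sqrt (s\<^sup>2 + t\<^sup>2)) * (t / sqrt (s\<^sup>2 + t\<^sup>2))) has_real_derivative profile' s / s) (at 0)"
    using DERIV_times_cosine_at_0[OF _ profile_deriv2] s by simp
  then have "((\<lambda>t. f' (s *\<^sub>R b + t *\<^sub>R i) i) has_real_derivative profile' s / s) (at 0)"
  proof (rule has_field_derivative_transform_within_open[OF _ \<open>open T\<close> \<open>0 \<in> T\<close>])
    show "profile' (sqrt (s\<^sup>2 + t\<^sup>2)) * (t / sqrt (s\<^sup>2 + t\<^sup>2)) = f' (s *\<^sub>R b + t *\<^sub>R i) i"
      if "t \<in> T" for t
      using first_derivative_orthogonal[of s i t] s i that by (simp add: T_def)
  qed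
  moreover have "((\<lambda>t. f' (s *\<^sub>R b + t *\<^sub>R i) i) has_real_derivative f'' (s *\<^sub>R b) i i) (at 0)"
    using has_real_derivative_along_line_blinfun[of f' "f'' (s *\<^sub>R b)" "s *\<^sub>R b" 0 i i]
      deriv2[OF \<open>s *\<^sub>R b \<in> annulus\<close>] by simp
  ultimately show ?thesis
    by (rule DERIV_unique[symmetric])
qed

lemma laplacian_profile:
  assumes "1 < s" "s < 2"
  shows "laplacian u (s *\<^sub>R b) = profile'' s + real (DIM('a) - 1) * profile' s / s"
proof -
  have "laplacian u (s *\<^sub>R b) = (\<Sum>i\<in>Basis. f'' (s *\<^sub>R b) i i)"
    using scaleR_Basis_in_annulus[OF assms] deriv1 deriv2
    by (intro laplacian_eq_sum_second_derivatives[OF open_annulus]) auto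
  also have "\<dots> = f'' (s *\<^sub>R b) b b + (\<Sum>i\<in>Basis - {b}. f'' (s *\<^sub>R b) i i)"
    by (rule sum.remove[OF finite_Basis b])
  also have "(\<Sum>i\<in>Basis - {b}. f'' (s *\<^sub>R b) i i) = (\<Sum>i\<in>Basis - {b}. profile' s / s)"
    using second_derivative_orthogonal[OF assms] by (intro sum.cong) auto
  finally show ?thesis
    using b by (simp add: profile''_def)
qed

lemma continuous_on_profile:
  assumes "continuous_on (closure annulus) u"
  shows "continuous_on {1..2} profile"
proof -
  have "(\<lambda>s. s *\<^sub>R b) ` closure {1<..<2} \<subseteq> closure ((\<lambda>s. s *\<^sub>R b) ` {1<..<2})"
    by (intro image_closure_subset continuous_intros closed_closure closure_subset)
  also have "\<dots> \<subseteq> closure annulus"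
    using scaleR_Basis_in_annulus by (intro closure_mono) auto
  finally have "(\<lambda>s. s *\<^sub>R b) ` {1..2} \<subseteq> closure annulus"
    by simp
  then show ?thesis
    unfolding profile_def[abs_def]
    by (intro continuous_on_compose2[OF assms]) (auto intro!: continuous_intros)
qed

lemma Linf_norm_eq_profile:
  assumes "\<And>x. x \<in> annulus \<Longrightarrow> 0 < u x" "1 < r0" "r0 < 2"
    and max: "\<And>s. s \<in> {1..2} \<Longrightarrow> profile s \<le> profile r0"
  shows "Linf_norm u = profile r0"
  unfolding Linf_norm_def
proof (rule cSup_eq_maximum)
  have "r0 *\<^sub>R b \<in> annulus"
    using scaleR_Basis_in_annulus assms(2,3) .
  then show "profile r0 \<in> (\<lambda>x. \<bar>u x\<bar>) ` annulus"
    using assms(1)[of "r0 *\<^sub>R b"] by (intro image_eqI[where x = "r0 *\<^sub>R b"]) (auto simp: profile_def)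
  show "y \<le> profile r0" if "y \<in> (\<lambda>x. \<bar>u x\<bar>) ` annulus" for y
    using that assms(1) max eq_profile_norm by (force simp: annulus_def)
qed

end

section \<open>Asymptotics of the ratio\<close>

lemma pos_rad_sol_radial_profile:
  fixes u :: "'a::euclidean_space \<Rightarrow> real"
  assumes "2 < p" "0 < lam" and sol: "pos_rad_sol p lam u"
  obtains v v' v'' r0 where "radial_profile (DIM('a) - 1) p lam v v' v'' r0" "Linf_norm u = v r0"
proof -
  have "C2_on annulus u" and cont_u: "continuous_on (closure annulus) u"
    and boundary: "\<And>x. norm x = 1 \<or> norm x = 2 \<Longrightarrow> u x = 0"
    and positive: "\<And>x. x \<in> annulus \<Longrightarrow> 0 < u x"
    and radial: "\<And>x y. norm x = norm y \<Longrightarrow> u x = u y"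
    and pde: "\<And>x. x \<in> annulus \<Longrightarrow> - laplacian u x + lam * u x = u x powr (p - 1)"
    using sol unfolding pos_rad_sol_def by blast+
  then obtain f' f'' where
    "\<And>x. x \<in> annulus \<Longrightarrow> (u has_derivative blinfun_apply (f' x)) (at x)"
    "\<And>x. x \<in> annulus \<Longrightarrow> (f' has_derivative blinfun_apply (f'' x)) (at x)"
    unfolding C2_on_def by blast
  moreover obtain b :: 'a where "b \<in> Basis"
    using nonempty_Basis by blast
  ultimately interpret radial_C2_on_annulus u f' f'' b
    using radial by unfold_locales
  have pos: "0 < profile s" if "1 < s" "s < 2" for s
    using positive scaleR_Basis_in_annulus[OF that] by (simp add: profile_def)
  have zero: "profile 1 = 0" "profile 2 = 0"
    using boundary b by (auto simp: profile_def)
  obtain r0 where "r0 \<in> {1..2}" and max: "\<And>s. s \<in> {1..2} \<Longrightarrow> profile s \<le> profile r0"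
    using continuous_attains_sup[OF compact_Icc _ continuous_on_profile[OF cont_u]] by auto
  moreover have "0 < profile r0"
    using pos[of "3 / 2"] max[of "3 / 2"] by auto
  ultimately have r0: "1 < r0" "r0 < 2"
    using zero by (auto simp: le_less)
  have ode: "profile'' s + real (DIM('a) - 1) * profile' s / s = lam * profile s - profile s powr (p - 1)"
    if "1 < s" "s < 2" for s
    using pde[OF scaleR_Basis_in_annulus[OF that]] laplacian_profile[OF that]
    by (simp add: profile_def)
  have "radial_profile (DIM('a) - 1) p lam profile profile' profile'' r0"
    using assms(1,2) continuous_on_profile[OF cont_u] zero pos profile_deriv1 profile_deriv2 ode r0 max
    by (unfold_locales; auto)
  moreover have "Linf_norm u = profile r0"
    using Linf_norm_eq_profile positive r0 max by auto
  ultimately show ?thesis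
    using that by blast
qed

theorem lemma2p3:
  fixes p :: real and u :: "real \<Rightarrow> 'a::euclidean_space \<Rightarrow> real"
  assumes "DIM('a) \<ge> 2"
    and "2 < p"
    and "DIM('a) = 2 \<or> p < 2 * real DIM('a) / (real DIM('a) - 2)"
    and "\<forall>lam>0. pos_rad_sol p lam (u lam)"
  shows "0 < Liminf at_top (\<lambda>lam. ereal (lam / Linf_norm (u lam) powr (p - 2))) \<and>
         Limsup at_top (\<lambda>lam. ereal (lam / Linf_norm (u lam) powr (p - 2))) \<le> 1"
proof -
  (* The hypotheses on the dimension and on subcriticality only serve the existence and
     uniqueness of u lam, which is assumed here. *)
  define \<epsilon> C where "\<epsilon> = eps_ratio p (DIM('a) - 1)" and "C = amplitude_bound p (DIM('a) - 1)"
  have bounds: "lam / Linf_norm (u lam) powr (p - 2) \<le> 1 \<and>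
      (\<epsilon> * C\<^sup>2 \<le> lam \<longrightarrow> \<epsilon> \<le> lam / Linf_norm (u lam) powr (p - 2))" if "0 < lam" for lam
  proof -
    obtain v v' v'' r0 where "radial_profile (DIM('a) - 1) p lam v v' v'' r0" "Linf_norm (u lam) = v r0"
      using pos_rad_sol_radial_profile[OF \<open>2 < p\<close> \<open>0 < lam\<close>] assms(4) \<open>0 < lam\<close> by blast
    then show ?thesis
      using radial_profile.ratio_le_1 radial_profile.eps_ratio_le_ratio by (fastforce simp: \<epsilon>_def C_def)
  qed
  have "\<forall>\<^sub>F lam in at_top. ereal \<epsilon> \<le> ereal (lam / Linf_norm (u lam) powr (p - 2))"
    by (rule eventually_mono[OF eventually_ge_at_top[of "max 1 (\<epsilon> * C\<^sup>2)"]]) (use bounds in auto)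
  then have "ereal \<epsilon> \<le> Liminf at_top (\<lambda>lam. ereal (lam / Linf_norm (u lam) powr (p - 2)))"
    by (rule Liminf_bounded)
  moreover have "0 < \<epsilon>"
    using eps_ratio_pos \<open>2 < p\<close> by (simp add: \<epsilon>_def)
  moreover have "\<forall>\<^sub>F lam in at_top. ereal (lam / Linf_norm (u lam) powr (p - 2)) \<le> 1"
    by (rule eventually_mono[OF eventually_gt_at_top[of 0]]) (use bounds in auto)
  then have "Limsup at_top (\<lambda>lam. ereal (lam / Linf_norm (u lam) powr (p - 2))) \<le> 1"
    by (rule Limsup_bounded)
  ultimately show ?thesis
    by (meson ereal_less(2) less_le_trans)
qed

end
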